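(* Let $R>0$, $\mathcal{D}=\{x\in\mathbb{R}^2:|x|<R\}$, and let $f$ be a $C^\infty$ function with $\operatorname{supp}f\subset\mathcal{D}$. Let $(Mf)(\xi,t)=\frac{1}{2\pi}\int_{S^1}f(\xi-t\theta)\,d\theta$ and $(I_*f)(x)=\frac{1}{2\pi}\int_{\mathcal{D}}f(y)\log|x-y|\,dy$. Then for $x\in\mathcal{D}$, $$(I_*f)(x)=\frac{1}{2\pi R}\int_{\partial\mathcal{D}}\int_0^{2R}(Mf)(\xi,t)\log\big|t^2-|x-\xi|^2\big|\,t\,dt\,d\xi+c_f,\qquad c_f=-\frac{\log R}{2\pi}\int_{\mathcal{D}}f(y)\,dy.$$
   Context: $d\theta$ and $d\xi$ denote arc-length measure on the unit circle $S^1$ and on the circle $\partial\mathcal{D}$, respectively. *)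

theory Defs
  imports "HOL-Analysis.Analysis"
begin

fun Ck :: "nat \<Rightarrow> ('a::euclidean_space \<Rightarrow> real) \<Rightarrow> bool" where
  "Ck 0 g = continuous_on UNIV g"
| "Ck (Suc k) g = (continuous_on UNIV g \<and> (\<forall>x. g differentiable (at x)) \<and>
      (\<forall>i\<in>Basis. Ck k (\<lambda>x. frechet_derivative g (at x) i)))"

definition smooth_fun :: "('a::euclidean_space \<Rightarrow> real) \<Rightarrow> bool" where
  "smooth_fun g \<longleftrightarrow> (\<forall>k. Ck k g)"

definition circ :: "real \<Rightarrow> real^2" where
  "circ s = vector [cos s, sin s]"

definition sph_mean :: "(real^2 \<Rightarrow> real) \<Rightarrow> real^2 \<Rightarrow> real \<Rightarrow> real" where
  "sph_mean f \<xi> t = (1 / (2 * pi)) * (LBINT s=0..2*pi. f (\<xi> - t *\<^sub>R circ s))"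

definition log_pot :: "real \<Rightarrow> (real^2 \<Rightarrow> real) \<Rightarrow> real^2 \<Rightarrow> real" where
  "log_pot R f x = (1 / (2 * pi)) * (LINT y:ball 0 R|lborel. f y * ln (norm (x - y)))"

end

theory Submission
  imports Defs "HOL-Real_Asymp.Real_Asymp"
begin

text \<open>
  Fix a boundary point \<open>\<xi> = R \<theta>(s)\<close> and put \<open>d = |x - \<xi>|\<close>. In polar coordinates centred at \<open>\<xi>\<close>
  the inner integral \<open>\<integral>\<^sub>0\<^sup>2\<^sup>R (M f)(\<xi>,t) log |t\<^sup>2 - d\<^sup>2| t dt\<close> is \<open>1/(2\<pi>)\<close> times
  \<open>\<integral> f(y) log ||\<xi> - y|\<^sup>2 - d\<^sup>2| dy\<close>, because \<open>f\<close> vanishes at distance \<open>\<ge> 2R\<close> from \<open>\<xi>\<close>.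
  After exchanging the order of integration it remains to integrate over \<open>s\<close> for fixed \<open>y \<noteq> x\<close>.
  Now \<open>|\<xi> - y|\<^sup>2 - |x - \<xi>|\<^sup>2 = A - B cos (s - \<phi>)\<close> with \<open>A = |y|\<^sup>2 - |x|\<^sup>2\<close>, \<open>B = 2R|y - x| > |A|\<close>,
  and \<open>A - B cos (s - \<phi>)\<close> factors as \<open>2B\<close> times a product of two half-angle sines, so the
  classical \<open>\<integral>\<^sub>0\<^sup>\<pi> log sin = -\<pi> log 2\<close> gives \<open>2\<pi> log (B/2) = 2\<pi> (log R + log |x - y|)\<close>.
  Integrating against \<open>f\<close> yields the formula with the constant \<open>c\<^sub>f\<close>. Fubini is justified by a bound
  on \<open>\<integral>\<^sub>0\<^sup>2\<^sup>R r |log |r\<^sup>2 - d\<^sup>2|| dr\<close> that is uniform in \<open>d\<close>.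
\<close>

section \<open>Integrals of \<open>log |sin|\<close>\<close>

lemma integrable_ln_Ioo:
  assumes "0 < a"
  shows "integrable lborel (\<lambda>x. indicator {0<..<a} x * ln (x::real))"
proof -
  have "set_integrable lborel (einterval 0 1) (\<lambda>x. - ln x)"
  proof (rule interval_integral_FTC_nonneg(1)[where F="\<lambda>x. x - x * ln x" and A=0 and B=1])
    show "\<And>x. 0 < ereal x \<Longrightarrow> ereal x < 1 \<Longrightarrow> ((\<lambda>x. x - x * ln x) has_real_derivative - ln x) (at x)"
      by (auto intro!: derivative_eq_intros)
    show "\<And>x. 0 < ereal x \<Longrightarrow> ereal x < 1 \<Longrightarrow> isCont (\<lambda>x. - ln x) x"
      by (auto intro!: continuous_intros)
    have "((\<lambda>x::real. x - x * ln x) \<longlongrightarrow> 0) (at_right 0)" by real_asymp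
    then show "(((\<lambda>x. x - x * ln x) \<circ> real_of_ereal) \<longlongrightarrow> 0) (at_right 0)"
      by (simp add: zero_ereal_def ereal_tendsto_simps)
    have "((\<lambda>x::real. x - x * ln x) \<longlongrightarrow> 1) (at_left 1)" by real_asymp
    then show "(((\<lambda>x. x - x * ln x) \<circ> real_of_ereal) \<longlongrightarrow> 1) (at_left 1)"
      by (simp add: one_ereal_def ereal_tendsto_simps)
  qed auto
  then have near_0: "integrable lborel (\<lambda>x. indicator {0<..<1} x * ln (x::real))"
    using integrable_minus unfolding set_integrable_def by (fastforce simp: zero_ereal_def one_ereal_def)
  have "continuous_on {1/2..max a 1} (\<lambda>x::real. ln x)"
    by (intro continuous_intros) auto
  then have away_from_0: "integrable lborel (\<lambda>x. indicator {1/2..max a 1} x * ln (x::real))"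
    using borel_integrable_compact[of "{1/2..max a 1}" ln] unfolding set_integrable_def by auto
  have "integrable lborel (\<lambda>x. indicator {0<..<1} x * ln (x::real) + indicator {1/2..max a 1} x * ln x)"
    using near_0 away_from_0 by simp
  then show ?thesis
  proof (rule Bochner_Integration.integrable_bound)
    show "AE x in lborel. norm (indicator {0<..<a} x * ln x)
        \<le> norm (indicator {0<..<1} x * ln (x::real) + indicator {1/2..max a 1} x * ln x)"
      by (intro AE_I2)
         (auto simp: indicator_def abs_mult split: if_splits)
  qed simp
qed

lemma integrable_indicator_mult_subset:
  fixes f :: "real \<Rightarrow> real"
  assumes "integrable lborel (\<lambda>x. indicator A x * f x)" "B \<subseteq> A" "B \<in> sets borel"
  shows "integrable lborel (\<lambda>x. indicator B x * f x)"
proof -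
  have "integrable lborel (\<lambda>x. (indicator A x * f x) * indicator B x)"
    using assms by (intro integrable_real_mult_indicator) auto
  moreover have "(\<lambda>x. (indicator A x * f x) * indicator B x) = (\<lambda>x. indicator B x * f x)"
    using assms(2) by (auto simp: indicator_def fun_eq_iff)
  ultimately show ?thesis by simp
qed

lemma sin_ge_half_self:
  assumes "0 \<le> (x::real)" "x \<le> 1"
  shows "x / 2 \<le> sin x"
proof (cases "x = 0")
  case False
  then have "0 < x" using assms by simp
  then obtain z where z: "0 < z" "z < x" "sin x - sin 0 = (x - 0) * cos z"
    using MVT2[of 0 x sin cos] by (auto intro: DERIV_sin)
  have "cos (pi/3) \<le> cos z"
    using z assms pi_gt3 by (intro cos_monotone_0_pi_le) auto
  then show ?thesis
    using z \<open>0 < x\<close> mult_left_mono[of "1/2" "cos z" x] by (simp add: cos_60)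
qed simp

lemma integrable_ln_abs_sin_Ioo_0_1:
  "integrable lborel (\<lambda>x. indicator {0<..<1} x * ln \<bar>sin (x::real)\<bar>)"
proof -
  have "integrable lborel (\<lambda>x. indicator {0<..<1} x * ln 2 - indicator {0<..<1} x * ln (x::real))"
    using integrable_ln_Ioo[of 1] by (intro Bochner_Integration.integrable_diff) auto
  then have "integrable lborel (\<lambda>x. indicator {0<..<1} x * (ln 2 - ln (x::real)))"
    by (simp add: algebra_simps)
  then show ?thesis
  proof (rule Bochner_Integration.integrable_bound)
    have "\<bar>ln \<bar>sin x\<bar>\<bar> \<le> \<bar>ln 2 - ln x\<bar>" if x: "0 < x" "x < 1" for x :: real
    proof -
      have "x / 2 \<le> sin x" using sin_ge_half_self[of x] x by simp
      then have "0 < sin x" "ln (x / 2) \<le> ln (sin x)"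
        using x by simp_all
      then have "ln x - ln 2 \<le> ln (sin x)" "0 < sin x"
        using x by (simp_all add: ln_div)
      moreover have "ln (sin x) \<le> 0" "ln x < 0" "0 < ln (2::real)"
        using \<open>0 < sin x\<close> x by simp_all
      ultimately show ?thesis by simp
    qed
    then show "AE x in lborel. norm (indicator {0<..<1} x * ln \<bar>sin x\<bar>)
        \<le> norm (indicator {0<..<1} x * (ln 2 - ln (x::real)))"
      by (intro AE_I2) (simp add: indicator_def abs_mult)
  qed simp
qed

lemma integrable_ln_abs_sin_Ioo_0_pi:
  "integrable lborel (\<lambda>x. indicator {0<..<pi} x * ln \<bar>sin (x::real)\<bar>)"
proof -
  have "integrable lborel (\<lambda>x. indicator {0<..<1} (pi + (-1) * x) * ln \<bar>sin (pi + (-1) * x)\<bar>)"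
    using lborel_integrable_real_affine[OF integrable_ln_abs_sin_Ioo_0_1, of "-1" pi] by simp
  moreover have "(\<lambda>x. indicator {0<..<1} (pi + (-1) * x) * ln \<bar>sin (pi + (-1) * x)\<bar>)
      = (\<lambda>x. indicator {pi-1<..<pi} x * ln \<bar>sin x\<bar>)"
    by (auto simp: indicator_def fun_eq_iff)
  ultimately have near_pi: "integrable lborel (\<lambda>x. indicator {pi-1<..<pi} x * ln \<bar>sin x\<bar>)"
    by simp
  have "continuous_on {1..pi-1} (\<lambda>x::real. ln \<bar>sin x\<bar>)"
  proof (intro continuous_intros ballI)
    fix x assume "x \<in> {1..pi-1::real}"
    then have "0 < sin x" by (intro sin_gt_zero) auto
    then show "\<bar>sin x\<bar> \<noteq> 0" by simp
  qed
  then have middle: "integrable lborel (\<lambda>x. indicator {1..pi-1} x * ln \<bar>sin (x::real)\<bar>)"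
    using borel_integrable_compact[of "{1..pi-1}" "\<lambda>x. ln \<bar>sin x\<bar>"]
    unfolding set_integrable_def by auto
  have "integrable lborel (\<lambda>x. indicator {0<..<1} x * ln \<bar>sin (x::real)\<bar>
      + indicator {1..pi-1} x * ln \<bar>sin x\<bar> + indicator {pi-1<..<pi} x * ln \<bar>sin x\<bar>)"
    using integrable_ln_abs_sin_Ioo_0_1 middle near_pi by simp
  moreover have "(\<lambda>x. indicator {0<..<1} x * ln \<bar>sin (x::real)\<bar>
      + indicator {1..pi-1} x * ln \<bar>sin x\<bar> + indicator {pi-1<..<pi} x * ln \<bar>sin x\<bar>)
      = (\<lambda>x. indicator {0<..<pi} x * ln \<bar>sin x\<bar>)"
    using pi_gt3 by (auto simp: indicator_def fun_eq_iff)
  ultimately show ?thesis by simp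
qed

lemma integrable_ln_abs_sin_Ioo_0_pi_half:
  "integrable lborel (\<lambda>x. indicator {0<..<pi/2} x * ln \<bar>sin (x::real)\<bar>)"
  by (rule integrable_indicator_mult_subset[OF integrable_ln_abs_sin_Ioo_0_pi]) auto

lemma integrable_ln_abs_cos_Ioo_0_pi_half:
  "integrable lborel (\<lambda>x. indicator {0<..<pi/2} x * ln \<bar>cos (x::real)\<bar>)"
proof -
  have "integrable lborel (\<lambda>x. indicator {0<..<pi/2} (pi/2 + (-1) * x) * ln \<bar>sin (pi/2 + (-1) * x)\<bar>)"
    using lborel_integrable_real_affine[OF integrable_ln_abs_sin_Ioo_0_pi_half, of "-1" "pi/2"] by simp
  moreover have "(\<lambda>x. indicator {0<..<pi/2} (pi/2 + (-1) * x) * ln \<bar>sin (pi/2 + (-1) * x)\<bar>)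
      = (\<lambda>x. indicator {0<..<pi/2} x * ln \<bar>cos (x::real)\<bar>)"
    by (auto simp: indicator_def fun_eq_iff sin_cos_eq)
  ultimately show ?thesis by simp
qed

lemma integral_ln_abs_sin_Ioo_0_pi_split:
  "(LINT x|lborel. indicator {0<..<pi} x * ln \<bar>sin (x::real)\<bar>)
    = (LINT x|lborel. indicator {0<..<pi/2} x * ln \<bar>sin x\<bar>)
      + (LINT x|lborel. indicator {0<..<pi/2} x * ln \<bar>cos x\<bar>)"
proof -
  have upper_half: "integrable lborel (\<lambda>x. indicator {pi/2<..<pi} x * ln \<bar>sin (x::real)\<bar>)"
    by (rule integrable_indicator_mult_subset[OF integrable_ln_abs_sin_Ioo_0_pi]) auto
  have "(LINT x|lborel. indicator {0<..<pi} x * ln \<bar>sin (x::real)\<bar>)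
      = (LINT x|lborel. indicator {0<..<pi/2} x * ln \<bar>sin x\<bar> + indicator {pi/2<..<pi} x * ln \<bar>sin x\<bar>)"
  proof (intro Bochner_Integration.integral_cong refl)
    fix x :: real
    show "indicator {0<..<pi} x * ln \<bar>sin x\<bar>
        = indicator {0<..<pi/2} x * ln \<bar>sin x\<bar> + indicator {pi/2<..<pi} x * ln \<bar>sin x\<bar>"
    proof (cases "x = pi/2")
      case True
      then have "sin x = 1" by (simp only: sin_pi_half)
      then show ?thesis by (simp add: indicator_def)
    qed (auto simp: indicator_def)
  qed
  also have "\<dots> = (LINT x|lborel. indicator {0<..<pi/2} x * ln \<bar>sin x\<bar>)
      + (LINT x|lborel. indicator {pi/2<..<pi} x * ln \<bar>sin x\<bar>)"
    using integrable_ln_abs_sin_Ioo_0_pi_half upper_half by simp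
  also have "(LINT x|lborel. indicator {pi/2<..<pi} x * ln \<bar>sin x\<bar>)
      = (LINT x|lborel. indicator {0<..<pi/2} x * ln \<bar>cos x\<bar>)"
    by (subst lborel_integral_real_affine[where c=1 and t="pi/2"])
       (auto intro!: Bochner_Integration.integral_cong simp: indicator_def sin_add)
  finally show ?thesis .
qed

lemma integral_ln_abs_sin_Ioo_0_pi_duplication:
  "(LINT x|lborel. indicator {0<..<pi} x * ln \<bar>sin (x::real)\<bar>)
    = pi * ln 2 + 2 * ((LINT x|lborel. indicator {0<..<pi/2} x * ln \<bar>sin x\<bar>)
      + (LINT x|lborel. indicator {0<..<pi/2} x * ln \<bar>cos x\<bar>))"
proof -
  have "(LINT x|lborel. indicator {0<..<pi} x * ln \<bar>sin (x::real)\<bar>)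
      = 2 * (LINT y|lborel. indicator {0<..<pi/2} y * ln \<bar>sin (2 * y)\<bar>)"
    by (subst lborel_integral_real_affine[where c=2 and t=0])
       (auto intro!: Bochner_Integration.integral_cong simp: indicator_def)
  also have "(LINT y|lborel. indicator {0<..<pi/2} y * ln \<bar>sin (2 * y)\<bar>)
      = (LINT y|lborel. indicator {0<..<pi/2} y * ln 2
          + (indicator {0<..<pi/2} y * ln \<bar>sin y\<bar> + indicator {0<..<pi/2} y * ln \<bar>cos y\<bar>))"
  proof (intro Bochner_Integration.integral_cong refl)
    fix y :: real
    show "indicator {0<..<pi/2} y * ln \<bar>sin (2 * y)\<bar> = indicator {0<..<pi/2} y * ln 2
        + (indicator {0<..<pi/2} y * ln \<bar>sin y\<bar> + indicator {0<..<pi/2} y * ln \<bar>cos y\<bar>)"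
    proof (cases "y \<in> {0<..<pi/2}")
      case True
      then have "0 < sin y" "0 < cos y" by (auto intro!: sin_gt_zero cos_gt_zero)
      then show ?thesis using True by (simp add: sin_double abs_mult ln_mult)
    qed simp
  qed
  also have "\<dots> = pi/2 * ln 2 + ((LINT x|lborel. indicator {0<..<pi/2} x * ln \<bar>sin x\<bar>)
      + (LINT x|lborel. indicator {0<..<pi/2} x * ln \<bar>cos x\<bar>))"
    using integrable_ln_abs_sin_Ioo_0_pi_half integrable_ln_abs_cos_Ioo_0_pi_half by simp
  finally show ?thesis by simp
qed

lemma integral_ln_abs_sin_Ioo_0_pi:
  "(LINT x|lborel. indicator {0<..<pi} x * ln \<bar>sin (x::real)\<bar>) = - pi * ln 2"
  using integral_ln_abs_sin_Ioo_0_pi_duplication integral_ln_abs_sin_Ioo_0_pi_split by simp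

lemma has_bochner_integral_ln_abs_sin_Ioo_pi_base:
  assumes a: "0 \<le> a" "a < pi"
  shows "has_bochner_integral lborel (\<lambda>x. indicator {a<..<a+pi} x * ln \<bar>sin (x::real)\<bar>) (- pi * ln 2)"
proof -
  define I0 where "I0 = (LINT x|lborel. indicator {0<..a} x * ln \<bar>sin (x::real)\<bar>)"
  define I1 where "I1 = (LINT x|lborel. indicator {a<..<pi} x * ln \<bar>sin (x::real)\<bar>)"
  have "integrable lborel (\<lambda>x. indicator {0<..a} x * ln \<bar>sin (x::real)\<bar>)"
    by (rule integrable_indicator_mult_subset[OF integrable_ln_abs_sin_Ioo_0_pi]) (use a in auto)
  then have initial: "has_bochner_integral lborel (\<lambda>x. indicator {0<..a} x * ln \<bar>sin (x::real)\<bar>) I0"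
    by (simp add: I0_def has_bochner_integral_iff)
  have "integrable lborel (\<lambda>x. indicator {a<..<pi} x * ln \<bar>sin (x::real)\<bar>)"
    by (rule integrable_indicator_mult_subset[OF integrable_ln_abs_sin_Ioo_0_pi]) (use a in auto)
  then have lower: "has_bochner_integral lborel (\<lambda>x. indicator {a<..<pi} x * ln \<bar>sin (x::real)\<bar>) I1"
    by (simp add: I1_def has_bochner_integral_iff)
  have "(\<lambda>x. indicator {pi<..pi+a} (pi + 1 * x) * ln \<bar>sin (pi + 1 * x)\<bar>)
      = (\<lambda>x. indicator {0<..a} x * ln \<bar>sin (x::real)\<bar>)"
    by (auto simp: indicator_def fun_eq_iff)
  then have upper: "has_bochner_integral lborel (\<lambda>x. indicator {pi<..pi+a} x * ln \<bar>sin (x::real)\<bar>) I0"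
    using initial lborel_has_bochner_integral_real_affine_iff[of 1
        "\<lambda>x. indicator {pi<..pi+a} x * ln \<bar>sin x\<bar>" I0 pi]
    by simp
  have "has_bochner_integral lborel (\<lambda>x. indicator {a<..<pi} x * ln \<bar>sin (x::real)\<bar>
      + indicator {0<..a} x * ln \<bar>sin x\<bar>) (I1 + I0)"
    using lower initial by (rule has_bochner_integral_add)
  moreover have "(\<lambda>x. indicator {a<..<pi} x * ln \<bar>sin (x::real)\<bar> + indicator {0<..a} x * ln \<bar>sin x\<bar>)
      = (\<lambda>x. indicator {0<..<pi} x * ln \<bar>sin x\<bar>)"
    using a by (auto simp: indicator_def fun_eq_iff)
  ultimately have "I1 + I0 = - pi * ln 2"
    using integral_ln_abs_sin_Ioo_0_pi by (simp add: has_bochner_integral_iff)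
  moreover have "AE x in lborel. indicator {a<..<pi} x * ln \<bar>sin (x::real)\<bar> + indicator {pi<..pi+a} x * ln \<bar>sin x\<bar>
      = indicator {a<..<a+pi} x * ln \<bar>sin x\<bar>"
    using AE_lborel_singleton[of "a+pi"]
    by eventually_elim (use a in \<open>auto simp: indicator_def\<close>)
  ultimately show ?thesis
    using has_bochner_integral_add[OF lower upper] by (subst (asm) has_bochner_integral_cong_AE) auto
qed

lemma has_bochner_integral_ln_abs_sin_Ioo_pi:
  "has_bochner_integral lborel (\<lambda>x. indicator {a<..<a+pi} x * ln \<bar>sin (x::real)\<bar>) (- pi * ln 2)"
proof -
  define k where "k = \<lfloor>a / pi\<rfloor>"
  define a0 where "a0 = a - of_int k * pi"
  have "of_int k \<le> a / pi" "a / pi < of_int k + 1"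
    unfolding k_def by linarith+
  then have "of_int k * pi \<le> a" "a < (of_int k + 1) * pi"
    by (simp_all add: field_simps)
  then have "0 \<le> a0" "a0 < pi"
    unfolding a0_def by (simp_all add: algebra_simps)
  then have "has_bochner_integral lborel (\<lambda>y. indicator {a0<..<a0+pi} y * ln \<bar>sin y\<bar>) (- pi * ln 2)"
    by (rule has_bochner_integral_ln_abs_sin_Ioo_pi_base)
  moreover have "(\<lambda>y. indicator {a0<..<a0+pi} y * ln \<bar>sin y\<bar>)
      = (\<lambda>y. indicator {a<..<a+pi} (of_int k * pi + 1 * y) * ln \<bar>sin (of_int k * pi + 1 * y)\<bar>)"
    by (auto simp: a0_def indicator_def fun_eq_iff sin_add abs_mult mult.commute)
  ultimately show ?thesis
    using lborel_has_bochner_integral_real_affine_iff[of 1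
        "\<lambda>x. indicator {a<..<a+pi} x * ln \<bar>sin x\<bar>" "- pi * ln 2" "of_int k * pi"]
    by simp
qed

lemma has_bochner_integral_ln_abs_sin_half:
  "has_bochner_integral lborel (\<lambda>s. indicator {0<..<2*pi} s * ln \<bar>sin ((s + c) / 2)\<bar>) (- 2 * pi * ln 2)"
proof -
  have "(\<lambda>s. indicator {c/2<..<c/2+pi} (c/2 + (1/2) * s) * ln \<bar>sin (c/2 + (1/2) * s)\<bar>)
      = (\<lambda>s. indicator {0<..<2*pi} s * ln \<bar>sin ((s + c) / 2)\<bar>)"
    by (auto simp: indicator_def fun_eq_iff add_divide_distrib ac_simps)
  then show ?thesis
    using has_bochner_integral_ln_abs_sin_Ioo_pi[of "c/2"]
      lborel_has_bochner_integral_real_affine_iff[of "1/2"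
        "\<lambda>x. indicator {c/2<..<c/2+pi} x * ln \<bar>sin x\<bar>" "- pi * ln 2" "c/2"]
    by (simp add: mult.assoc)
qed

lemma AE_sin_half_nonzero: "AE s in lborel. sin ((s + c) / 2) \<noteq> (0::real)"
proof -
  have "{s. sin ((s + c) / 2) = (0::real)} \<subseteq> range (\<lambda>i::int. 2 * of_int i * pi - c)"
  proof
    fix s assume "s \<in> {s. sin ((s + c) / 2) = (0::real)}"
    then obtain i :: int where "(s + c) / 2 = of_int i * pi"
      using sin_zero_iff_int2 by auto
    then show "s \<in> range (\<lambda>i::int. 2 * of_int i * pi - c)"
      by (intro range_eqI[of _ _ i]) (simp add: field_simps)
  qed
  then have "countable {s. sin ((s + c) / 2) = (0::real)}"
    by (rule countable_subset) simp
  then show ?thesis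
    by (intro AE_I'[OF countable_imp_null_set_lborel]) auto
qed

lemma has_bochner_integral_ln_abs_const_minus_cos:
  fixes A B \<phi> :: real
  assumes "\<bar>A\<bar> < B"
  shows "has_bochner_integral lborel
    (\<lambda>s. indicator {0<..<2*pi} s * ln \<bar>A - B * cos (s - \<phi>)\<bar>) (2 * pi * ln (B / 2))"
proof -
  have B: "0 < B" using assms by linarith
  define \<alpha> where "\<alpha> = arccos (A / B)"
  have cos_\<alpha>: "cos \<alpha> = A / B"
    unfolding \<alpha>_def using assms B by (intro cos_arccos) (auto simp: field_simps abs_le_iff)
  have factor: "A - B * cos (s - \<phi>) = 2 * B * (sin ((s + (\<alpha> - \<phi>)) / 2) * sin ((s + (- \<phi> - \<alpha>)) / 2))" for s
  proof -
    have "A - B * cos (s - \<phi>) = B * (cos \<alpha> - cos (s - \<phi>))"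
      using cos_\<alpha> B by (simp add: field_simps)
    also have "\<dots> = B * (2 * sin ((\<alpha> + (s - \<phi>)) / 2) * sin (((s - \<phi>) - \<alpha>) / 2))"
      by (simp add: cos_diff_cos)
    finally show ?thesis by (simp add: algebra_simps)
  qed
  have ae: "AE s in lborel. indicator {0<..<2*pi} s * ln \<bar>A - B * cos (s - \<phi>)\<bar>
      = indicator {0<..<2*pi} s * ln (2 * B) + (indicator {0<..<2*pi} s * ln \<bar>sin ((s + (\<alpha> - \<phi>)) / 2)\<bar>
        + indicator {0<..<2*pi} s * ln \<bar>sin ((s + (- \<phi> - \<alpha>)) / 2)\<bar>)"
    using AE_sin_half_nonzero[of "\<alpha> - \<phi>"] AE_sin_half_nonzero[of "- \<phi> - \<alpha>"]
    by eventually_elim (use B in \<open>simp add: factor abs_mult ln_mult algebra_simps\<close>)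
  have "has_bochner_integral lborel (indicator {0<..<2*pi}) (2 * pi)"
    using has_bochner_integral_real_indicator[of "{0<..<2*pi}" lborel] by simp
  then have "has_bochner_integral lborel
      (\<lambda>s. indicator {0<..<2*pi} s * ln (2 * B) + (indicator {0<..<2*pi} s * ln \<bar>sin ((s + (\<alpha> - \<phi>)) / 2)\<bar>
        + indicator {0<..<2*pi} s * ln \<bar>sin ((s + (- \<phi> - \<alpha>)) / 2)\<bar>))
      (2 * pi * ln (2 * B) + (- 2 * pi * ln 2 + - 2 * pi * ln 2))"
    by (intro has_bochner_integral_add has_bochner_integral_mult_left
        has_bochner_integral_ln_abs_sin_half)
  moreover have "2 * pi * ln (2 * B) + (- 2 * pi * ln 2 + - 2 * pi * ln 2) = 2 * pi * ln (B / 2)"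
    using B by (simp add: ln_mult ln_div algebra_simps)
  ultimately show ?thesis
    using ae by (subst has_bochner_integral_cong_AE) auto
qed

section \<open>The circle and polar coordinates\<close>

lemma circ_nth [simp]: "circ s $ 1 = cos s" "circ s $ 2 = sin s"
  by (simp_all add: circ_def)

lemma inner_vec2: "(x::real^2) \<bullet> y = x$1 * y$1 + x$2 * y$2"
  by (simp add: inner_vec_def sum_2)

lemma norm_vec2_power2: "(norm (x::real^2))\<^sup>2 = (x$1)\<^sup>2 + (x$2)\<^sup>2"
  unfolding power2_norm_eq_inner inner_vec2 by (simp add: power2_eq_square)

lemma norm_circ [simp]: "norm (circ s) = 1"
  using norm_vec2_power2[of "circ s"] norm_ge_zero[of "circ s"] by (simp add: power2_eq_1_iff)

lemma inner_circ: "circ s \<bullet> circ p = cos (s - p)"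
  by (simp add: inner_vec2 cos_diff)

lemma vec2_polar_form:
  obtains p where "0 \<le> p" "p < 2 * pi" "(v::real^2) = norm v *\<^sub>R circ p"
proof (cases "v = 0")
  case True
  then show ?thesis using that[of 0] by simp
next
  case False
  then have n: "norm v > 0" by simp
  have "(v$1 / norm v)\<^sup>2 + (v$2 / norm v)\<^sup>2 = ((v$1)\<^sup>2 + (v$2)\<^sup>2) / (norm v)\<^sup>2"
    by (simp add: power_divide add_divide_distrib)
  also have "\<dots> = 1" using n by (simp flip: norm_vec2_power2)
  finally obtain p where p: "0 \<le> p" "p < 2 * pi" "v$1 / norm v = cos p" "v$2 / norm v = sin p"
    using sincos_total_2pi by metis
  have "v = norm v *\<^sub>R circ p"
    unfolding vec_eq_iff forall_2 using p n by (simp add: field_simps)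
  then show ?thesis using p that by blast
qed

lemma has_bochner_integral_ln_abs_circle_dist_diff:
  fixes z x :: "real^2"
  assumes "R > 0" "norm z < R" "norm x < R" "z \<noteq> x"
  shows "has_bochner_integral lborel
    (\<lambda>s. indicator {0<..<2*pi} s * ln \<bar>(norm (R *\<^sub>R circ s - z))\<^sup>2 - (norm (x - R *\<^sub>R circ s))\<^sup>2\<bar>)
    (2 * pi * ln (R * norm (z - x)))"
proof -
  define \<rho> where "\<rho> = norm (z - x)"
  obtain p where p: "z - x = \<rho> *\<^sub>R circ p"
    using vec2_polar_form[of "z - x"] unfolding \<rho>_def by blast
  define A where "A = (norm z)\<^sup>2 - (norm x)\<^sup>2"
  define B where "B = 2 * R * \<rho>"
  have "(norm (R *\<^sub>R circ s - z))\<^sup>2 - (norm (x - R *\<^sub>R circ s))\<^sup>2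
      = (norm z)\<^sup>2 - (norm x)\<^sup>2 - 2 * R * (circ s \<bullet> (z - x))" for s
    by (simp add: power2_norm_eq_inner algebra_simps inner_commute)
  then have expand: "(norm (R *\<^sub>R circ s - z))\<^sup>2 - (norm (x - R *\<^sub>R circ s))\<^sup>2 = A - B * cos (s - p)" for s
    by (simp add: A_def B_def p inner_circ)
  have "A = (norm z - norm x) * (norm z + norm x)"
    by (simp add: A_def power2_eq_square algebra_simps)
  then have "\<bar>A\<bar> = \<bar>norm z - norm x\<bar> * (norm z + norm x)"
    by (simp add: abs_mult)
  also have "\<dots> \<le> \<rho> * (norm z + norm x)"
    unfolding \<rho>_def by (intro mult_right_mono norm_triangle_ineq3) auto
  also have "\<dots> < \<rho> * (2 * R)"
    using assms unfolding \<rho>_def by (intro mult_strict_left_mono) auto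
  finally have "\<bar>A\<bar> < B" by (simp add: B_def mult_ac)
  moreover have "ln (B / 2) = ln (R * norm (z - x))"
    by (simp add: B_def \<rho>_def)
  ultimately show ?thesis
    using has_bochner_integral_ln_abs_const_minus_cos[of A B p] by (simp add: expand)
qed

text \<open>Polar coordinates as a self-map of \<open>real^2\<close> (radius in component 1, angle in component 2),
  since the library's change of variables theorem is stated for maps \<open>real^n \<Rightarrow> real^n\<close>.\<close>

definition polar :: "real^2 \<Rightarrow> real^2" where
  "polar v = (v$1) *\<^sub>R circ (v$2)"

definition polar_deriv :: "real^2 \<Rightarrow> real^2 \<Rightarrow> real^2" where
  "polar_deriv v h = (h$1) *\<^sub>R circ (v$2) + (v$1 * h$2) *\<^sub>R vector [- sin (v$2), cos (v$2)]"

definition polar_domain :: "(real^2) set" where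
  "polar_domain = {v. 0 < v$1 \<and> 0 < v$2 \<and> v$2 < 2*pi}"

definition slit_plane :: "(real^2) set" where
  "slit_plane = - {y. y$2 = 0 \<and> 0 \<le> y$1}"

lemma measurable_circ [measurable]: "circ \<in> borel_measurable borel"
proof -
  have "continuous_on UNIV (\<lambda>s::real. \<chi> i::2. if i = 1 then cos s else sin s)"
  proof (intro continuous_intros)
    fix i :: 2
    show "continuous_on UNIV (\<lambda>s::real. if i = 1 then cos s else sin s)"
      by (cases "i = 1") (auto intro!: continuous_intros)
  qed
  moreover have "circ = (\<lambda>s. \<chi> i. if i = 1 then cos s else sin s)"
    by (auto simp: fun_eq_iff vec_eq_iff forall_2)
  ultimately show ?thesis
    by (metis borel_measurable_continuous_onI)
qed

lemma measurable_polar [measurable]: "polar \<in> borel_measurable borel"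
  unfolding polar_def[abs_def] by measurable

lemma has_derivative_polar: "(polar has_derivative polar_deriv v) (at v within S)"
proof -
  have nth: "((\<lambda>x::real^2. x $ k) has_derivative (\<lambda>x. x $ k)) (at v within S)" for k
    using bounded_linear_vec_nth by (rule bounded_linear.has_derivative[OF _ has_derivative_ident])
  show ?thesis
  proof (rule has_derivative_componentwise_within[THEN iffD2], rule ballI)
    fix i :: "real^2" assume "i \<in> Basis"
    then obtain k where k: "i = axis k 1" by (auto simp: Basis_vec_def)
    have "k = 1 \<or> k = 2" using exhaust_2 by blast
    then show "((\<lambda>x. polar x \<bullet> i) has_derivative (\<lambda>x. polar_deriv v x \<bullet> i)) (at v within S)"
      unfolding k by (elim disjE)
        (auto simp: polar_def polar_deriv_def inner_axis algebra_simps intro!: derivative_eq_intros nth)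
  qed
qed

lemma det_polar_deriv: "det (matrix (polar_deriv v)) = v$1"
proof -
  have "det (matrix (polar_deriv v)) = v$1 * (cos (v$2) * cos (v$2)) + v$1 * (sin (v$2) * sin (v$2))"
    by (simp add: det_2 matrix_def polar_deriv_def algebra_simps axis_def)
  also have "\<dots> = v$1 * (cos (v$2) * cos (v$2) + sin (v$2) * sin (v$2))"
    by (rule distrib_left[symmetric])
  also have "\<dots> = v$1" by (simp only: sin_cos_squared_add3 mult_1_right)
  finally show ?thesis .
qed

lemma open_polar_domain: "open polar_domain"
proof -
  have "polar_domain = {v. 0 < v$1} \<inter> {v. 0 < v$2} \<inter> {v. v$2 < 2*pi}"
    by (auto simp: polar_domain_def)
  moreover have "open {v::real^2. 0 < v$1}" "open {v::real^2. 0 < v$2}" "open {v::real^2. v$2 < 2*pi}"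
    by (auto intro!: open_Collect_less continuous_intros)
  ultimately show ?thesis by (metis open_Int)
qed

lemma polar_domain_sets [measurable]: "polar_domain \<in> sets lborel" "polar_domain \<in> sets lebesgue"
  using open_polar_domain by auto

lemma closed_Compl_slit_plane: "closed (- slit_plane)"
proof -
  have "- slit_plane = {y. y$2 = 0} \<inter> {y::real^2. 0 \<le> y$1}"
    by (auto simp: slit_plane_def)
  moreover have "closed {y::real^2. y$2 = 0}" "closed {y::real^2. 0 \<le> y$1}"
    by (auto intro!: closed_Collect_eq closed_Collect_le continuous_intros)
  ultimately show ?thesis by auto
qed

lemma slit_plane_sets [measurable]: "slit_plane \<in> sets lborel"
  using closed_Compl_slit_plane by (simp add: closed_def)

lemma null_sets_Compl_slit_plane: "- slit_plane \<in> null_sets lebesgue"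
proof -
  have "negligible (- slit_plane)"
    by (rule negligible_subset[OF negligible_standard_hyperplane_cart])
       (auto simp: slit_plane_def)
  then show ?thesis by (simp add: negligible_iff_null_sets)
qed

lemma inj_on_polar: "inj_on polar polar_domain"
proof (rule inj_onI)
  fix u v assume u: "u \<in> polar_domain" and v: "v \<in> polar_domain" and e: "polar u = polar v"
  have "norm (polar u) = u$1" "norm (polar v) = v$1"
    using u v by (auto simp: polar_def polar_domain_def)
  then have radius: "u$1 = v$1" using e by simp
  then have "circ (u$2) = circ (v$2)"
    using e u by (auto simp: polar_def polar_domain_def)
  then have "sin (u$2) = sin (v$2) \<and> cos (u$2) = cos (v$2)"
    by (auto simp: vec_eq_iff forall_2)
  then obtain n :: int where n: "u$2 = v$2 + 2 * pi * n"
    using sin_cos_eq_iff by blast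
  have "0 < v$2" "v$2 < 2*pi" "0 < u$2" "u$2 < 2*pi"
    using u v by (auto simp: polar_domain_def)
  then have "- 2 * pi < 2 * pi * n" "2 * pi * n < 2 * pi"
    using n by linarith+
  then have "pi * (-1) < pi * real_of_int n" "pi * real_of_int n < pi * 1"
    by simp_all
  then have "-1 < real_of_int n" "real_of_int n < 1"
    by (simp_all only: mult_less_cancel_left_pos[OF pi_gt_zero])
  then have "n = 0" by linarith
  then show "u = v" using radius n by (simp add: vec_eq_iff forall_2)
qed

lemma polar_in_slit_plane:
  assumes "v \<in> polar_domain"
  shows "polar v \<in> slit_plane"
proof (rule ccontr)
  have v: "0 < v$1" "0 < v$2" "v$2 < 2*pi"
    using assms by (auto simp: polar_domain_def)
  assume "polar v \<notin> slit_plane"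
  then have "sin (v$2) = 0" and cos_nonneg: "0 \<le> cos (v$2)"
    using v by (auto simp: slit_plane_def polar_def zero_le_mult_iff)
  then obtain i :: int where i: "v$2 = of_int i * pi"
    using sin_zero_iff_int2 by blast
  then have "0 < real_of_int i" "real_of_int i < 2"
    using v by (simp_all add: zero_less_mult_iff mult_less_cancel_right_pos)
  then have "i = 1" by linarith
  then show False using i cos_nonneg by simp
qed

lemma slit_plane_subset_polar_image: "slit_plane \<subseteq> polar ` polar_domain"
proof
  fix y :: "real^2" assume y: "y \<in> slit_plane"
  then have "y \<noteq> 0" by (auto simp: slit_plane_def)
  obtain t where t: "0 \<le> t" "t < 2 * pi" "y = norm y *\<^sub>R circ t"
    using vec2_polar_form by blast
  have "t \<noteq> 0"
  proof
    assume "t = 0"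
    then have "y$2 = 0" "0 \<le> y$1"
      using arg_cong[OF t(3), of "\<lambda>v. v$1"] arg_cong[OF t(3), of "\<lambda>v. v$2"] by simp_all
    then show False using y by (simp add: slit_plane_def)
  qed
  define v :: "real^2" where "v = vector [norm y, t]"
  have "v \<in> polar_domain"
    using t \<open>t \<noteq> 0\<close> \<open>y \<noteq> 0\<close> by (simp add: v_def polar_domain_def)
  moreover have "polar v = y"
    using t by (simp add: v_def polar_def)
  ultimately show "y \<in> polar ` polar_domain" by blast
qed

lemma polar_image: "polar ` polar_domain = slit_plane"
  using polar_in_slit_plane slit_plane_subset_polar_image by blast

text \<open>The change of variables theorem is stated for \<open>real^n\<close>-valued integrands; real-valued
  ones are transported through \<open>real^1\<close>.\<close>

lemma set_integrable_vec1_iff: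
  "set_integrable M A (\<lambda>x. vec (f x) :: real^1) \<longleftrightarrow> set_integrable M A (f :: _ \<Rightarrow> real)"
proof
  assume "set_integrable M A (\<lambda>x. vec (f x) :: real^1)"
  then have "integrable M (\<lambda>x. (indicator A x *\<^sub>R (vec (f x) :: real^1)) $ 1)"
    unfolding set_integrable_def by (rule integrable_bounded_linear[OF bounded_linear_vec_nth])
  then show "set_integrable M A f" unfolding set_integrable_def by simp
next
  assume "set_integrable M A f"
  then have "integrable M (\<lambda>x. (indicator A x *\<^sub>R f x) *\<^sub>R (vec 1 :: real^1))"
    unfolding set_integrable_def by (rule integrable_bounded_linear[OF bounded_linear_scaleR_left])
  moreover have "(\<lambda>x. (indicator A x *\<^sub>R f x) *\<^sub>R (vec 1 :: real^1)) = (\<lambda>x. indicator A x *\<^sub>R vec (f x))"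
    by (auto simp: vec_eq_iff)
  ultimately show "set_integrable M A (\<lambda>x. vec (f x) :: real^1)"
    unfolding set_integrable_def by simp
qed

lemma set_integral_vec1:
  assumes "set_integrable M A (f :: _ \<Rightarrow> real)"
  shows "(LINT x:A|M. (vec (f x) :: real^1)) = vec (LINT x:A|M. f x)"
proof -
  have "(\<lambda>x. indicator A x *\<^sub>R (vec (f x) :: real^1)) = (\<lambda>x. (indicator A x *\<^sub>R f x) *\<^sub>R (vec 1 :: real^1))"
    by (auto simp: vec_eq_iff)
  then have "(LINT x:A|M. (vec (f x) :: real^1)) = (LINT x|M. indicator A x *\<^sub>R f x) *\<^sub>R (vec 1 :: real^1)"
    using assms unfolding set_lebesgue_integral_def set_integrable_def by simp
  then show ?thesis
    unfolding set_lebesgue_integral_def by (simp add: vec_eq_iff)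
qed

lemma polar_change_of_variables_vec1:
  fixes G :: "real^2 \<Rightarrow> real^1"
  shows "set_integrable lebesgue polar_domain (\<lambda>v. \<bar>v$1\<bar> *\<^sub>R G (polar v))
      \<and> (LINT v:polar_domain|lebesgue. \<bar>v$1\<bar> *\<^sub>R G (polar v)) = b
    \<longleftrightarrow> set_integrable lebesgue slit_plane G \<and> (LINT y:slit_plane|lebesgue. G y) = b"
proof -
  have cov: "(\<lambda>v. \<bar>v$1\<bar> *\<^sub>R G (polar v)) absolutely_integrable_on polar_domain
      \<and> integral polar_domain (\<lambda>v. \<bar>v$1\<bar> *\<^sub>R G (polar v)) = b
    \<longleftrightarrow> G absolutely_integrable_on slit_plane \<and> integral slit_plane G = b"
    using has_absolute_integral_change_of_variables[OF polar_domain_sets(2) has_derivative_polar inj_on_polar]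
    by (simp add: det_polar_deriv polar_image)
  show ?thesis
  proof
    assume "set_integrable lebesgue polar_domain (\<lambda>v. \<bar>v$1\<bar> *\<^sub>R G (polar v))
      \<and> (LINT v:polar_domain|lebesgue. \<bar>v$1\<bar> *\<^sub>R G (polar v)) = b"
    then have "G absolutely_integrable_on slit_plane \<and> integral slit_plane G = b"
      using cov set_lebesgue_integral_eq_integral(2)[of polar_domain "\<lambda>v. \<bar>v$1\<bar> *\<^sub>R G (polar v)"] by simp
    then show "set_integrable lebesgue slit_plane G \<and> (LINT y:slit_plane|lebesgue. G y) = b"
      using set_lebesgue_integral_eq_integral(2)[of slit_plane G] by simp
  next
    assume "set_integrable lebesgue slit_plane G \<and> (LINT y:slit_plane|lebesgue. G y) = b"
    then have "(\<lambda>v. \<bar>v$1\<bar> *\<^sub>R G (polar v)) absolutely_integrable_on polar_domain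
      \<and> integral polar_domain (\<lambda>v. \<bar>v$1\<bar> *\<^sub>R G (polar v)) = b"
      using cov set_lebesgue_integral_eq_integral(2)[of slit_plane G] by simp
    then show "set_integrable lebesgue polar_domain (\<lambda>v. \<bar>v$1\<bar> *\<^sub>R G (polar v))
      \<and> (LINT v:polar_domain|lebesgue. \<bar>v$1\<bar> *\<^sub>R G (polar v)) = b"
      using set_lebesgue_integral_eq_integral(2)[of polar_domain "\<lambda>v. \<bar>v$1\<bar> *\<^sub>R G (polar v)"] by simp
  qed
qed

lemma polar_change_of_variables:
  fixes F :: "real^2 \<Rightarrow> real"
  shows "set_integrable lebesgue polar_domain (\<lambda>v. \<bar>v$1\<bar> * F (polar v))
      \<longleftrightarrow> set_integrable lebesgue slit_plane F"
    and "set_integrable lebesgue slit_plane F \<Longrightarrow>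
      (LINT v:polar_domain|lebesgue. \<bar>v$1\<bar> * F (polar v)) = (LINT y:slit_plane|lebesgue. F y)"
proof -
  have "(\<lambda>v. \<bar>v$1\<bar> *\<^sub>R vec (F (polar v))) = (\<lambda>v. (vec (\<bar>v$1\<bar> * F (polar v)) :: real^1))"
    by (auto simp: vec_eq_iff)
  note cov = polar_change_of_variables_vec1[of "\<lambda>y. vec (F y)", unfolded this]
  show iff: "set_integrable lebesgue polar_domain (\<lambda>v. \<bar>v$1\<bar> * F (polar v))
      \<longleftrightarrow> set_integrable lebesgue slit_plane F"
    using cov[of "LINT y:slit_plane|lebesgue. vec (F y)"]
      cov[of "LINT v:polar_domain|lebesgue. vec (\<bar>v$1\<bar> * F (polar v))"]
    by (auto simp: set_integrable_vec1_iff)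
  assume F: "set_integrable lebesgue slit_plane F"
  then have "vec (LINT v:polar_domain|lebesgue. \<bar>v$1\<bar> * F (polar v)) = (vec (LINT y:slit_plane|lebesgue. F y) :: real^1)"
    using cov[of "LINT y:slit_plane|lebesgue. vec (F y)"] iff
    by (simp add: set_integrable_vec1_iff set_integral_vec1)
  then show "(LINT v:polar_domain|lebesgue. \<bar>v$1\<bar> * F (polar v)) = (LINT y:slit_plane|lebesgue. F y)"
    by (simp add: vec_eq_iff)
qed

definition vec2_of_pair :: "real \<times> real \<Rightarrow> real^2" where
  "vec2_of_pair p = (\<chi> i. if i = 1 then fst p else snd p)"

lemma vec2_of_pair_nth [simp]: "vec2_of_pair p $ 1 = fst p" "vec2_of_pair p $ 2 = snd p"
  by (simp_all add: vec2_of_pair_def)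

lemma Basis_vec2: "(Basis :: (real^2) set) = {axis 1 1, axis 2 1}"
  by (auto simp: Basis_vec_def UNIV_2)

lemma measurable_vec2_of_pair [measurable]: "vec2_of_pair \<in> borel_measurable (lborel \<Otimes>\<^sub>M lborel)"
proof -
  have "continuous_on UNIV vec2_of_pair"
    unfolding vec2_of_pair_def
  proof (intro continuous_intros)
    fix i :: 2
    show "continuous_on UNIV (\<lambda>x::real\<times>real. if i = 1 then fst x else snd x)"
      by (cases "i = 1") (auto intro!: continuous_intros)
  qed
  then have "vec2_of_pair \<in> borel_measurable borel"
    by (rule borel_measurable_continuous_onI)
  then show ?thesis by (simp add: lborel_prod measurable_lborel1)
qed

lemma distr_vec2_of_pair: "distr (lborel \<Otimes>\<^sub>M lborel) borel vec2_of_pair = (lborel :: (real^2) measure)"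
proof (rule lborel_eqI[symmetric])
  fix l u :: "real^2"
  assume le: "\<And>b. b \<in> Basis \<Longrightarrow> l \<bullet> b \<le> u \<bullet> b"
  have lu: "l$1 \<le> u$1" "l$2 \<le> u$2"
    using le[of "axis 1 1"] le[of "axis 2 1"] by (auto simp: Basis_vec2 inner_axis)
  have "vec2_of_pair -` box l u \<inter> space (lborel \<Otimes>\<^sub>M lborel) = {l$1<..<u$1} \<times> {l$2<..<u$2}"
    by (auto simp: mem_box Basis_vec2 inner_axis space_pair_measure)
  then have "emeasure (distr (lborel \<Otimes>\<^sub>M lborel) borel vec2_of_pair) (box l u)
      = emeasure (lborel \<Otimes>\<^sub>M lborel) ({l$1<..<u$1} \<times> {l$2<..<u$2})"
    by (simp add: emeasure_distr)
  also have "\<dots> = emeasure lborel {l$1<..<u$1} * emeasure lborel {l$2<..<u$2}"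
    by (rule lborel.emeasure_pair_measure_Times) auto
  also have "\<dots> = (\<Prod>b\<in>Basis. (u - l) \<bullet> b)"
    using lu by (simp add: Basis_vec2 inner_axis axis_eq_axis ennreal_mult)
  finally show "emeasure (distr (lborel \<Otimes>\<^sub>M lborel) borel vec2_of_pair) (box l u) = (\<Prod>b\<in>Basis. (u - l) \<bullet> b)" .
qed simp

lemma
  fixes F :: "real^2 \<Rightarrow> real"
  assumes [measurable]: "F \<in> borel_measurable borel"
  shows set_integrable_slit_plane_iff: "set_integrable lebesgue slit_plane F \<longleftrightarrow> integrable lborel F"
    and set_integral_slit_plane: "(LINT y:slit_plane|lebesgue. F y) = (LINT y|lborel. F y)"
proof -
  have F: "F \<in> borel_measurable lborel"
    by (simp add: measurable_lborel1)
  have ae: "AE x in lebesgue. indicator slit_plane x *\<^sub>R F x = F x"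
    using AE_not_in[OF null_sets_Compl_slit_plane] by eventually_elim auto
  have meas: "(\<lambda>x. indicator slit_plane x *\<^sub>R F x) \<in> borel_measurable lebesgue"
    by (intro measurable_completion) measurable
  show "set_integrable lebesgue slit_plane F \<longleftrightarrow> integrable lborel F"
    unfolding set_integrable_def
    using integrable_cong_AE[OF meas measurable_completion[OF F] ae] integrable_completion[OF F] by simp
  show "(LINT y:slit_plane|lebesgue. F y) = (LINT y|lborel. F y)"
    unfolding set_lebesgue_integral_def
    using integral_cong_AE[OF meas measurable_completion[OF F] ae] integral_completion[OF F] by simp
qed

lemma integral_polar_origin:
  fixes F :: "real^2 \<Rightarrow> real"
  assumes F_borel [measurable]: "F \<in> borel_measurable borel"
  defines "P \<equiv> \<lambda>p. indicator ({0<..} \<times> {0<..<2*pi}) p * (fst p * F (fst p *\<^sub>R circ (snd p)))"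
  shows "integrable lborel F \<longleftrightarrow> integrable (lborel \<Otimes>\<^sub>M lborel) P"
    and "integrable lborel F \<Longrightarrow> (LINT y|lborel. F y) = (LINT p|(lborel \<Otimes>\<^sub>M lborel). P p)"
proof -
  define h where "h v = \<bar>v$1\<bar> * F (polar v)" for v :: "real^2"
  have h_borel [measurable]: "(\<lambda>v. indicator polar_domain v *\<^sub>R h v) \<in> borel_measurable borel"
    unfolding h_def[abs_def] by measurable
  then have h_lborel [measurable]: "(\<lambda>v. indicator polar_domain v *\<^sub>R h v) \<in> borel_measurable lborel"
    by (simp add: measurable_lborel1)
  have P_eq: "(\<lambda>p. indicator polar_domain (vec2_of_pair p) * h (vec2_of_pair p)) = P"
    by (auto simp: fun_eq_iff P_def h_def polar_domain_def polar_def indicator_def)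
  have domain_integrable: "set_integrable lebesgue polar_domain h \<longleftrightarrow> integrable (lborel \<Otimes>\<^sub>M lborel) P"
    unfolding set_integrable_def integrable_completion[OF h_lborel]
    using integrable_distr_eq[OF measurable_vec2_of_pair h_borel]
    by (simp add: distr_vec2_of_pair P_eq)
  have domain_integral: "(LINT v:polar_domain|lebesgue. h v) = (LINT p|(lborel \<Otimes>\<^sub>M lborel). P p)"
    unfolding set_lebesgue_integral_def integral_completion[OF h_lborel]
    using integral_distr[OF measurable_vec2_of_pair h_borel]
    by (simp add: distr_vec2_of_pair P_eq)
  show "integrable lborel F \<longleftrightarrow> integrable (lborel \<Otimes>\<^sub>M lborel) P"
    using polar_change_of_variables(1)[of F] set_integrable_slit_plane_iff[OF F_borel] domain_integrable
    by (simp add: h_def[abs_def])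
  assume "integrable lborel F"
  then show "(LINT y|lborel. F y) = (LINT p|(lborel \<Otimes>\<^sub>M lborel). P p)"
    using polar_change_of_variables(2)[of F] set_integrable_slit_plane_iff[OF F_borel]
      set_integral_slit_plane[OF F_borel] domain_integral
    by (simp add: h_def[abs_def])
qed

lemma distr_lborel_reflect: "distr lborel borel (\<lambda>x. c - x) = (lborel :: 'a::euclidean_space measure)"
proof -
  have "lborel = density (distr lborel borel (\<lambda>x. c + (-1::real) *\<^sub>R x)) (\<lambda>_. \<bar>-1::real\<bar>^DIM('a))"
    by (rule lborel_affine) simp
  then show ?thesis by (simp add: density_1)
qed

lemma
  fixes F :: "'a::euclidean_space \<Rightarrow> real"
  assumes [measurable]: "F \<in> borel_measurable borel"
  shows integrable_reflect_iff: "integrable lborel (\<lambda>x. F (c - x)) \<longleftrightarrow> integrable lborel F"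
    and integral_reflect: "(LINT x|lborel. F (c - x)) = (LINT x|lborel. F x)"
  using integrable_distr_eq[of "\<lambda>x. c - x" lborel borel F] integral_distr[of "\<lambda>x. c - x" lborel borel F]
  by (simp_all add: distr_lborel_reflect)

definition polar_integrand :: "real^2 \<Rightarrow> (real^2 \<Rightarrow> real) \<Rightarrow> real \<times> real \<Rightarrow> real" where
  "polar_integrand c F p = indicator ({0<..} \<times> {0<..<2*pi}) p * (fst p * F (c - fst p *\<^sub>R circ (snd p)))"

lemma
  fixes F :: "real^2 \<Rightarrow> real"
  assumes [measurable]: "F \<in> borel_measurable borel"
  shows integrable_polar_iff: "integrable lborel F \<longleftrightarrow> integrable (lborel \<Otimes>\<^sub>M lborel) (polar_integrand c F)"
    and integral_polar: "integrable lborel F \<Longrightarrow>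
      (LINT y|lborel. F y) = (LINT p|(lborel \<Otimes>\<^sub>M lborel). polar_integrand c F p)"
proof -
  have [measurable]: "(\<lambda>y. F (c - y)) \<in> borel_measurable borel" by measurable
  have "(\<lambda>p. indicator ({0<..} \<times> {0<..<2*pi}) p * (fst p * F (c - fst p *\<^sub>R circ (snd p))))
      = polar_integrand c F"
    by (simp add: fun_eq_iff polar_integrand_def)
  note origin = integral_polar_origin[of "\<lambda>y. F (c - y)", unfolded this]
  show "integrable lborel F \<longleftrightarrow> integrable (lborel \<Otimes>\<^sub>M lborel) (polar_integrand c F)"
    using origin(1) integrable_reflect_iff[of F c] by simp
  assume "integrable lborel F"
  then show "(LINT y|lborel. F y) = (LINT p|(lborel \<Otimes>\<^sub>M lborel). polar_integrand c F p)"
    using origin(2) integrable_reflect_iff[of F c] integral_reflect[of F c] by simp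
qed

lemma
  fixes a b :: "real \<Rightarrow> real"
  assumes a: "integrable lborel a" and b: "integrable lborel b"
  shows integrable_lborel_pair_mult: "integrable (lborel \<Otimes>\<^sub>M lborel) (\<lambda>p. a (fst p) * b (snd p))"
    and integral_lborel_pair_mult:
      "(LINT p|(lborel \<Otimes>\<^sub>M lborel). a (fst p) * b (snd p)) = (LINT x|lborel. a x) * (LINT y|lborel. b y)"
proof -
  have [measurable]: "a \<in> borel_measurable lborel" "b \<in> borel_measurable lborel"
    using a b by auto
  show i: "integrable (lborel \<Otimes>\<^sub>M lborel) (\<lambda>p. a (fst p) * b (snd p))"
  proof (rule lborel_pair.Fubini_integrable)
    have "integrable lborel (\<lambda>x. \<bar>a x\<bar> * (LINT y|lborel. \<bar>b y\<bar>))"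
      using a by (intro integrable_mult_left) auto
    then show "integrable lborel (\<lambda>x. LINT y|lborel. norm (a (fst (x, y)) * b (snd (x, y))))"
      by (simp add: abs_mult)
  qed (use b in auto)
  then show "(LINT p|(lborel \<Otimes>\<^sub>M lborel). a (fst p) * b (snd p)) = (LINT x|lborel. a x) * (LINT y|lborel. b y)"
    using lborel_pair.integral_fst'[OF i] by simp
qed

section \<open>A logarithmic integral bound\<close>

lemma integrable_abs_ln_abs_Ioo:
  assumes "0 < a"
  shows "integrable lborel (\<lambda>u. indicator {-a<..<a} u * \<bar>ln \<bar>u::real\<bar>\<bar>)"
proof -
  have "integrable lborel (\<lambda>u. \<bar>indicator {0<..<a} u * ln (u::real)\<bar>)"
    using integrable_ln_Ioo[OF assms] by (rule integrable_abs)
  moreover have "(\<lambda>u. \<bar>indicator {0<..<a} u * ln (u::real)\<bar>) = (\<lambda>u. indicator {0<..<a} u * \<bar>ln \<bar>u\<bar>\<bar>)"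
    by (auto simp: indicator_def fun_eq_iff)
  ultimately have pos: "integrable lborel (\<lambda>u. indicator {0<..<a} u * \<bar>ln \<bar>u::real\<bar>\<bar>)"
    by simp
  have "integrable lborel (\<lambda>u. indicator {0<..<a} (0 + (-1) * u) * \<bar>ln \<bar>0 + (-1) * u::real\<bar>\<bar>)"
    using lborel_integrable_real_affine[OF pos, of "-1" 0] by simp
  moreover have "(\<lambda>u. indicator {0<..<a} (0 + (-1) * u) * \<bar>ln \<bar>0 + (-1) * u::real\<bar>\<bar>)
      = (\<lambda>u. indicator {-a<..<0} u * \<bar>ln \<bar>u\<bar>\<bar>)"
    by (auto simp: indicator_def fun_eq_iff)
  ultimately have neg: "integrable lborel (\<lambda>u. indicator {-a<..<0} u * \<bar>ln \<bar>u::real\<bar>\<bar>)"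
    by simp
  have "integrable lborel (\<lambda>u. indicator {0<..<a} u * \<bar>ln \<bar>u::real\<bar>\<bar> + indicator {-a<..<0} u * \<bar>ln \<bar>u\<bar>\<bar>)"
    using pos neg by simp
  moreover have "(\<lambda>u. indicator {0<..<a} u * \<bar>ln \<bar>u::real\<bar>\<bar> + indicator {-a<..<0} u * \<bar>ln \<bar>u\<bar>\<bar>)
      = (\<lambda>u. indicator {-a<..<a} u * \<bar>ln \<bar>u\<bar>\<bar>)"
    by (auto simp: indicator_def fun_eq_iff)
  ultimately show ?thesis by simp
qed

lemma abs_ln_abs_square_diff_le:
  fixes r d a :: real
  assumes r: "0 < r" "r < a" and d: "0 \<le> d" "d \<le> a"
  shows "\<bar>ln \<bar>r\<^sup>2 - d\<^sup>2\<bar>\<bar> \<le> \<bar>ln \<bar>r - d\<bar>\<bar> + \<bar>ln \<bar>r\<bar>\<bar> + \<bar>ln (2 * a)\<bar>"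
proof (cases "r = d")
  case False
  have rd: "0 < r + d" using r d by simp
  have "r\<^sup>2 - d\<^sup>2 = (r - d) * (r + d)" by (simp add: power2_eq_square algebra_simps)
  then have "ln \<bar>r\<^sup>2 - d\<^sup>2\<bar> = ln \<bar>r - d\<bar> + ln (r + d)"
    using rd False by (simp add: abs_mult ln_mult)
  moreover have "\<bar>ln (r + d)\<bar> \<le> \<bar>ln \<bar>r\<bar>\<bar> + \<bar>ln (2 * a)\<bar>"
  proof (cases "1 \<le> r + d")
    case True
    moreover have "ln (r + d) \<le> ln (2 * a)" using r d by simp
    ultimately show ?thesis by simp
  next
    case False
    then have "ln (r + d) < 0" using rd by simp
    moreover have "ln r \<le> ln (r + d)" using r d by simp
    ultimately show ?thesis using r by simp
  qed
  ultimately show ?thesis using abs_triangle_ineq[of "ln \<bar>r - d\<bar>" "ln (r + d)"] by linarith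
qed simp

lemma has_bochner_integral_ln_abs_square_diff_majorant:
  fixes a d :: real
  assumes a: "0 < a"
  defines "L \<equiv> \<lambda>u. indicator {-a<..<a} u * \<bar>ln \<bar>u::real\<bar>\<bar>"
  shows "has_bochner_integral lborel (\<lambda>r. a * (L (r - d) + L r + indicator {0<..<a} r * \<bar>ln (2 * a)\<bar>))
    (a * (2 * integral\<^sup>L lborel L + a * \<bar>ln (2 * a)\<bar>))"
proof -
  have L: "integrable lborel L"
    unfolding L_def using integrable_abs_ln_abs_Ioo[OF a] .
  have "integrable lborel (\<lambda>r. L (-d + 1 * r))" "(LINT r|lborel. L (-d + 1 * r)) = integral\<^sup>L lborel L"
    using lborel_integrable_real_affine[OF L, of 1 "-d"] lborel_integral_real_affine[of 1 L "-d"] by simp_all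
  then have "has_bochner_integral lborel (\<lambda>r. L (r - d)) (integral\<^sup>L lborel L)"
    by (simp add: has_bochner_integral_iff)
  moreover have "has_bochner_integral lborel (\<lambda>r. indicator {0<..<a} r * \<bar>ln (2 * a)\<bar>) (a * \<bar>ln (2 * a)\<bar>)"
    using has_bochner_integral_real_indicator[of "{0<..<a}" lborel] a
    by (intro has_bochner_integral_mult_left) auto
  ultimately have "has_bochner_integral lborel (\<lambda>r. L (r - d) + L r + indicator {0<..<a} r * \<bar>ln (2 * a)\<bar>)
      (integral\<^sup>L lborel L + integral\<^sup>L lborel L + a * \<bar>ln (2 * a)\<bar>)"
    using L by (intro has_bochner_integral_add) (simp_all add: has_bochner_integral_iff)
  then have "has_bochner_integral lborel (\<lambda>r. a * (L (r - d) + L r + indicator {0<..<a} r * \<bar>ln (2 * a)\<bar>))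
      (a * (integral\<^sup>L lborel L + integral\<^sup>L lborel L + a * \<bar>ln (2 * a)\<bar>))"
    by (rule has_bochner_integral_mult_right)
  then show ?thesis by (simp add: algebra_simps)
qed

text \<open>Uniformity in \<open>d\<close> is what later justifies Fubini over the boundary circle.\<close>

lemma
  fixes a d :: real
  assumes a: "0 < a" and d: "0 \<le> d" "d \<le> a"
  shows integrable_ln_abs_square_diff:
      "integrable lborel (\<lambda>r. indicator {0<..<a} r * (r * \<bar>ln \<bar>r\<^sup>2 - d\<^sup>2\<bar>\<bar>))"
    and integral_ln_abs_square_diff_le:
      "(LINT r|lborel. indicator {0<..<a} r * (r * \<bar>ln \<bar>r\<^sup>2 - d\<^sup>2\<bar>\<bar>))
        \<le> a * (2 * (LINT u|lborel. indicator {-a<..<a} u * \<bar>ln \<bar>u\<bar>\<bar>) + a * \<bar>ln (2 * a)\<bar>)"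
proof -
  define L where "L u = indicator {-a<..<a} u * \<bar>ln \<bar>u::real\<bar>\<bar>" for u
  define M where "M r = a * (L (r - d) + L r + indicator {0<..<a} r * \<bar>ln (2 * a)\<bar>)" for r
  have M: "has_bochner_integral lborel M (a * (2 * (LINT u|lborel. L u) + a * \<bar>ln (2 * a)\<bar>))"
    using has_bochner_integral_ln_abs_square_diff_majorant[OF a, of d]
    unfolding M_def[abs_def] L_def[abs_def] by simp
  have bound: "norm (indicator {0<..<a} r * (r * \<bar>ln \<bar>r\<^sup>2 - d\<^sup>2\<bar>\<bar>)) \<le> M r" for r
  proof (cases "r \<in> {0<..<a}")
    case True
    then have r: "0 < r" "r < a" by auto
    then have "L (r - d) = \<bar>ln \<bar>r - d\<bar>\<bar>" "L r = \<bar>ln \<bar>r\<bar>\<bar>"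
      using d by (auto simp: L_def indicator_def)
    moreover have "r * \<bar>ln \<bar>r\<^sup>2 - d\<^sup>2\<bar>\<bar> \<le> a * (\<bar>ln \<bar>r - d\<bar>\<bar> + \<bar>ln \<bar>r\<bar>\<bar> + \<bar>ln (2 * a)\<bar>)"
      using abs_ln_abs_square_diff_le[OF r d] r by (intro mult_mono) auto
    ultimately show ?thesis using True r by (simp add: M_def abs_mult)
  next
    case False
    have "0 \<le> M r"
      unfolding M_def L_def using a by (intro mult_nonneg_nonneg add_nonneg_nonneg) auto
    then show ?thesis using False by simp
  qed
  have M_integrable: "integrable lborel M"
    using M by (simp add: has_bochner_integral_iff)
  show i: "integrable lborel (\<lambda>r. indicator {0<..<a} r * (r * \<bar>ln \<bar>r\<^sup>2 - d\<^sup>2\<bar>\<bar>))"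
    by (rule Bochner_Integration.integrable_bound[OF M_integrable])
       (use order_trans[OF bound abs_ge_self] in auto)
  have "(LINT r|lborel. indicator {0<..<a} r * (r * \<bar>ln \<bar>r\<^sup>2 - d\<^sup>2\<bar>\<bar>)) \<le> (LINT r|lborel. M r)"
    using i M_integrable bound by (intro integral_mono) (auto intro: order_trans[OF abs_ge_self])
  then show "(LINT r|lborel. indicator {0<..<a} r * (r * \<bar>ln \<bar>r\<^sup>2 - d\<^sup>2\<bar>\<bar>))
      \<le> a * (2 * (LINT u|lborel. indicator {-a<..<a} u * \<bar>ln \<bar>u\<bar>\<bar>) + a * \<bar>ln (2 * a)\<bar>)"
    using M by (simp add: has_bochner_integral_iff L_def)
qed

section \<open>Functions supported in a disc\<close>

lemma LBINT_0_eq_indicator: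
  fixes b :: real
  assumes "0 \<le> b"
  shows "(LBINT t=0..b. g t) = (LINT t|lborel. indicator {0<..<b} t * (g t :: real))"
proof -
  have "(LBINT t=ereal 0..ereal b. g t) = (LINT t|lborel. indicator {0<..<b} t * g t)"
    using assms by (simp add: interval_lebesgue_integral_def set_lebesgue_integral_def)
  then show ?thesis by (simp add: zero_ereal_def)
qed

locale disc_supported =
  fixes R :: real and f :: "real^2 \<Rightarrow> real" and C :: real
  assumes R_pos: "R > 0"
    and continuous: "continuous_on UNIV f"
    and vanishes: "\<And>y. R \<le> norm y \<Longrightarrow> f y = 0"
    and bounded: "\<And>y. \<bar>f y\<bar> \<le> C"
begin

lemma measurable_f [measurable]: "f \<in> borel_measurable borel"
  using continuous by (rule borel_measurable_continuous_onI)

lemma integrable_f: "integrable lborel f"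
proof -
  have "integrable lborel (\<lambda>y. indicator (cball 0 R) y *\<^sub>R f y)"
    by (rule borel_integrable_compact) (auto intro: continuous_on_subset[OF continuous])
  moreover have "(\<lambda>y. indicator (cball 0 R) y *\<^sub>R f y) = f"
    by (auto simp: fun_eq_iff indicator_def vanishes)
  ultimately show ?thesis by simp
qed

definition f_log :: "real^2 \<Rightarrow> real \<Rightarrow> real^2 \<Rightarrow> real" where
  "f_log c d y = f y * ln \<bar>(norm (c - y))\<^sup>2 - d\<^sup>2\<bar>"

lemma measurable_f_log [measurable]: "f_log c d \<in> borel_measurable borel"
  unfolding f_log_def[abs_def] by measurable

text \<open>Since \<open>f\<close> vanishes outside the disc and \<open>c\<close> lies in its closure, only radii below \<open>2 R\<close> contribute.\<close>

lemma polar_integrand_f_log: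
  assumes "norm c \<le> R"
  shows "polar_integrand c (f_log c d) (r, s) = indicator {0<..<2*R} r * indicator {0<..<2*pi} s
     * (r * ln \<bar>r\<^sup>2 - d\<^sup>2\<bar> * f (c - r *\<^sub>R circ s))"
proof (cases "0 < r \<and> 2 * R \<le> r")
  case True
  have "norm (r *\<^sub>R circ s) - norm c \<le> norm (c - r *\<^sub>R circ s)"
    by (metis norm_minus_commute norm_triangle_ineq2)
  then have "R \<le> norm (c - r *\<^sub>R circ s)"
    using True assms by simp
  then show ?thesis
    using True by (simp add: polar_integrand_def f_log_def vanishes indicator_def)
qed (auto simp: polar_integrand_def f_log_def indicator_def)

lemma abs_polar_integrand_f_log_le:
  assumes "norm c \<le> R"
  shows "\<bar>polar_integrand c (f_log c d) (r, s)\<bar>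
    \<le> C * (indicator {0<..<2*R} r * (r * \<bar>ln \<bar>r\<^sup>2 - d\<^sup>2\<bar>\<bar>)) * indicator {0<..<2*pi} s"
proof -
  have "\<bar>polar_integrand c (f_log c d) (r, s)\<bar> = indicator {0<..<2*R} r * indicator {0<..<2*pi} s
     * (\<bar>r\<bar> * \<bar>ln \<bar>r\<^sup>2 - d\<^sup>2\<bar>\<bar> * \<bar>f (c - r *\<^sub>R circ s)\<bar>)"
    by (simp add: polar_integrand_f_log[OF assms] abs_mult)
  also have "\<dots> \<le> indicator {0<..<2*R} r * indicator {0<..<2*pi} s * (\<bar>r\<bar> * \<bar>ln \<bar>r\<^sup>2 - d\<^sup>2\<bar>\<bar> * C)"
    by (intro mult_left_mono bounded) auto
  also have "\<dots> = C * (indicator {0<..<2*R} r * (r * \<bar>ln \<bar>r\<^sup>2 - d\<^sup>2\<bar>\<bar>)) * indicator {0<..<2*pi} s"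
    by (simp add: indicator_def)
  finally show ?thesis .
qed

lemma integrable_polar_integrand_f_log:
  assumes "norm c \<le> R" "0 \<le> d" "d \<le> 2 * R"
  shows "integrable (lborel \<Otimes>\<^sub>M lborel) (polar_integrand c (f_log c d))"
proof (rule Bochner_Integration.integrable_bound)
  show "integrable (lborel \<Otimes>\<^sub>M lborel)
    (\<lambda>p. C * (indicator {0<..<2*R} (fst p) * (fst p * \<bar>ln \<bar>(fst p)\<^sup>2 - d\<^sup>2\<bar>\<bar>)) * indicator {0<..<2*pi} (snd p))"
    using integrable_ln_abs_square_diff[of "2*R" d] assms R_pos
    by (intro integrable_lborel_pair_mult integrable_mult_right) auto
  show "polar_integrand c (f_log c d) \<in> borel_measurable (lborel \<Otimes>\<^sub>M lborel)"
    unfolding polar_integrand_def[abs_def] by measurable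
  show "AE p in lborel \<Otimes>\<^sub>M lborel. norm (polar_integrand c (f_log c d) p)
    \<le> norm (C * (indicator {0<..<2*R} (fst p) * (fst p * \<bar>ln \<bar>(fst p)\<^sup>2 - d\<^sup>2\<bar>\<bar>)) * indicator {0<..<2*pi} (snd p))"
  proof (intro AE_I2)
    fix p :: "real \<times> real"
    show "norm (polar_integrand c (f_log c d) p)
      \<le> norm (C * (indicator {0<..<2*R} (fst p) * (fst p * \<bar>ln \<bar>(fst p)\<^sup>2 - d\<^sup>2\<bar>\<bar>)) * indicator {0<..<2*pi} (snd p))"
      using abs_polar_integrand_f_log_le[OF assms(1), of d "fst p" "snd p"] by simp
  qed
qed

lemma integrable_f_log:
  assumes "norm c \<le> R" "0 \<le> d" "d \<le> 2 * R"
  shows "integrable lborel (f_log c d)"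
  using integrable_polar_iff[of "f_log c d" c] integrable_polar_integrand_f_log[OF assms] by simp

lemma integral_f_log:
  assumes "norm c \<le> R" "0 \<le> d" "d \<le> 2 * R"
  shows "(LINT y|lborel. f_log c d y) = (LINT r|lborel. indicator {0<..<2*R} r * (r * ln \<bar>r\<^sup>2 - d\<^sup>2\<bar>
          * (LINT s|lborel. indicator {0<..<2*pi} s * f (c - r *\<^sub>R circ s))))"
proof -
  have "(LINT y|lborel. f_log c d y) = (LINT p|(lborel \<Otimes>\<^sub>M lborel). polar_integrand c (f_log c d) p)"
    using integral_polar[OF measurable_f_log integrable_f_log[OF assms]] .
  also have "\<dots> = (LINT r|lborel. LINT s|lborel. polar_integrand c (f_log c d) (r, s))"
    using lborel_pair.integral_fst'[OF integrable_polar_integrand_f_log[OF assms]] by simp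
  also have "\<dots> = (LINT r|lborel. indicator {0<..<2*R} r * (r * ln \<bar>r\<^sup>2 - d\<^sup>2\<bar>
          * (LINT s|lborel. indicator {0<..<2*pi} s * f (c - r *\<^sub>R circ s))))"
  proof (intro Bochner_Integration.integral_cong refl)
    fix r
    have "(LINT s|lborel. polar_integrand c (f_log c d) (r, s))
        = (LINT s|lborel. (indicator {0<..<2*R} r * (r * ln \<bar>r\<^sup>2 - d\<^sup>2\<bar>))
          * (indicator {0<..<2*pi} s * f (c - r *\<^sub>R circ s)))"
      by (intro Bochner_Integration.integral_cong refl) (simp add: polar_integrand_f_log[OF assms(1)])
    then show "(LINT s|lborel. polar_integrand c (f_log c d) (r, s))
        = indicator {0<..<2*R} r * (r * ln \<bar>r\<^sup>2 - d\<^sup>2\<bar>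
          * (LINT s|lborel. indicator {0<..<2*pi} s * f (c - r *\<^sub>R circ s)))"
      by simp
  qed
  finally show ?thesis .
qed

lemma integral_abs_f_log_uniform_bound:
  "\<exists>K. \<forall>(c::real^2) d. norm c \<le> R \<longrightarrow> 0 \<le> d \<longrightarrow> d \<le> 2 * R \<longrightarrow> (LINT y|lborel. \<bar>f_log c d y\<bar>) \<le> K"
proof (intro exI allI impI)
  fix c :: "real^2" and d :: real
  assume cd: "norm c \<le> R" "0 \<le> d" "d \<le> 2 * R"
  let ?g = "\<lambda>r. indicator {0<..<2*R} r * (r * \<bar>ln \<bar>r\<^sup>2 - d\<^sup>2\<bar>\<bar>)"
  have g: "integrable lborel ?g"
    using integrable_ln_abs_square_diff[of "2*R" d] cd R_pos by simp
  have majorant: "integrable (lborel \<Otimes>\<^sub>M lborel) (\<lambda>p. C * ?g (fst p) * indicator {0<..<2*pi} (snd p))"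
    using g by (intro integrable_lborel_pair_mult integrable_mult_right) auto
  have [measurable]: "(\<lambda>y. \<bar>f_log c d y\<bar>) \<in> borel_measurable borel"
    by measurable
  have "polar_integrand c (\<lambda>y. \<bar>f_log c d y\<bar>) = (\<lambda>p. \<bar>polar_integrand c (f_log c d) p\<bar>)"
    by (auto simp: polar_integrand_def fun_eq_iff abs_mult indicator_def)
  then have "(LINT y|lborel. \<bar>f_log c d y\<bar>) = (LINT p|(lborel \<Otimes>\<^sub>M lborel). \<bar>polar_integrand c (f_log c d) p\<bar>)"
    using integral_polar[of "\<lambda>y. \<bar>f_log c d y\<bar>" c] integrable_f_log[OF cd] by simp
  also have "\<dots> \<le> (LINT p|(lborel \<Otimes>\<^sub>M lborel). C * ?g (fst p) * indicator {0<..<2*pi} (snd p))"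
    using integrable_polar_integrand_f_log[OF cd] majorant abs_polar_integrand_f_log_le[OF cd(1)]
    by (intro integral_mono) auto
  also have "\<dots> = 2 * pi * C * (LINT r|lborel. ?g r)"
    using integral_lborel_pair_mult[of "\<lambda>r. C * ?g r" "indicator {0<..<2*pi}"] g by simp
  also have "\<dots> \<le> 2 * pi * C * (2 * R * (2 * (LINT u|lborel. indicator {-(2*R)<..<2*R} u * \<bar>ln \<bar>u\<bar>\<bar>)
      + 2 * R * \<bar>ln (2 * (2 * R))\<bar>))"
    using integral_ln_abs_square_diff_le[of "2*R" d] cd R_pos bounded[of 0]
    by (intro mult_left_mono) auto
  finally show "(LINT y|lborel. \<bar>f_log c d y\<bar>) \<le> 2 * pi * C * (2 * R * (2 * (LINT u|lborel.
      indicator {-(2*R)<..<2*R} u * \<bar>ln \<bar>u\<bar>\<bar>) + 2 * R * \<bar>ln (2 * (2 * R))\<bar>))" .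
qed

lemma norm_diff_boundary_le:
  assumes "norm x < R"
  shows "norm (x - R *\<^sub>R circ s) \<le> 2 * R"
  using norm_triangle_ineq4[of x "R *\<^sub>R circ s"] assms R_pos by simp

lemma integral_sph_mean_ln:
  assumes x: "norm x < R"
  shows "(LBINT t=0..2*R. sph_mean f (R *\<^sub>R circ s) t * ln \<bar>t\<^sup>2 - (norm (x - R *\<^sub>R circ s))\<^sup>2\<bar> * t)
       = (1 / (2*pi)) * (LINT y|lborel. f_log (R *\<^sub>R circ s) (norm (x - R *\<^sub>R circ s)) y)"
proof -
  let ?\<xi> = "R *\<^sub>R circ s" and ?d = "norm (x - R *\<^sub>R circ s)"
  have "(LBINT t=0..2*R. sph_mean f ?\<xi> t * ln \<bar>t\<^sup>2 - ?d\<^sup>2\<bar> * t)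
      = (LINT t|lborel. indicator {0<..<2*R} t * (sph_mean f ?\<xi> t * ln \<bar>t\<^sup>2 - ?d\<^sup>2\<bar> * t))"
    using R_pos by (simp add: LBINT_0_eq_indicator)
  also have "\<dots> = (LINT t|lborel. (1 / (2*pi)) * (indicator {0<..<2*R} t * (t * ln \<bar>t\<^sup>2 - ?d\<^sup>2\<bar>
          * (LINT s'|lborel. indicator {0<..<2*pi} s' * f (?\<xi> - t *\<^sub>R circ s')))))"
    by (intro Bochner_Integration.integral_cong refl) (simp add: sph_mean_def LBINT_0_eq_indicator)
  also have "\<dots> = (1 / (2*pi)) * (LINT y|lborel. f_log ?\<xi> ?d y)"
    using integral_f_log[of ?\<xi> ?d] R_pos norm_diff_boundary_le[OF x] by simp
  finally show ?thesis .
qed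

definition boundary_integrand :: "real^2 \<Rightarrow> real \<times> (real^2) \<Rightarrow> real" where
  "boundary_integrand x p =
    indicator {0<..<2*pi} (fst p) * f_log (R *\<^sub>R circ (fst p)) (norm (x - R *\<^sub>R circ (fst p))) (snd p)"

lemma measurable_boundary_integrand [measurable]:
  "boundary_integrand x \<in> borel_measurable (lborel \<Otimes>\<^sub>M lborel)"
  unfolding boundary_integrand_def[abs_def] f_log_def by measurable

lemma integrable_boundary_integrand:
  assumes x: "norm x < R"
  shows "integrable (lborel \<Otimes>\<^sub>M lborel) (boundary_integrand x)"
proof (rule lborel_pair.Fubini_integrable)
  show "AE s in lborel. integrable lborel (\<lambda>y. boundary_integrand x (s, y))"
    using integrable_f_log[of "R *\<^sub>R circ _"] R_pos norm_diff_boundary_le[OF x]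
    by (simp add: boundary_integrand_def)
  obtain K where K: "\<And>c d. norm c \<le> R \<Longrightarrow> 0 \<le> d \<Longrightarrow> d \<le> 2 * R \<Longrightarrow> (LINT y|lborel. \<bar>f_log c d y\<bar>) \<le> K"
    using integral_abs_f_log_uniform_bound by blast
  show "integrable lborel (\<lambda>s. LINT y|lborel. norm (boundary_integrand x (s, y)))"
  proof (rule Bochner_Integration.integrable_bound)
    show "integrable lborel (\<lambda>s. indicator {0<..<2*pi} s * K)"
      by (intro integrable_mult_left integrable_real_indicator) auto
    have "(LINT y|lborel. norm (boundary_integrand x (s, y)))
        = indicator {0<..<2*pi} s * (LINT y|lborel. \<bar>f_log (R *\<^sub>R circ s) (norm (x - R *\<^sub>R circ s)) y\<bar>)" for s
      by (simp add: boundary_integrand_def abs_mult)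
    moreover have "(LINT y|lborel. \<bar>f_log (R *\<^sub>R circ s) (norm (x - R *\<^sub>R circ s)) y\<bar>) \<le> K" for s
      using K R_pos norm_diff_boundary_le[OF x] by simp
    ultimately show "AE s in lborel. norm (LINT y|lborel. norm (boundary_integrand x (s, y)))
        \<le> norm (indicator {0<..<2*pi} s * K)"
      by (intro AE_I2) (auto simp: indicator_def intro: order_trans[OF _ abs_ge_self])
  qed measurable
qed (rule measurable_boundary_integrand)

text \<open>The angular integral of the kernel is where the logarithm of \<open>\<bar>x - y\<bar>\<close> comes from.\<close>

lemma integral_boundary_integrand_fst:
  assumes x: "norm x < R" and "y \<noteq> x"
  shows "(LINT s|lborel. boundary_integrand x (s, y)) = 2 * pi * (ln R * f y + f_log x 0 y / 2)"
proof (cases "norm y < R")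
  case True
  have "(LINT s|lborel. boundary_integrand x (s, y)) = (LINT s|lborel. f y * (indicator {0<..<2*pi} s *
      ln \<bar>(norm (R *\<^sub>R circ s - y))\<^sup>2 - (norm (x - R *\<^sub>R circ s))\<^sup>2\<bar>))"
    by (simp add: boundary_integrand_def f_log_def mult_ac)
  also have "\<dots> = f y * (2 * pi * ln (R * norm (y - x)))"
    using has_bochner_integral_ln_abs_circle_dist_diff[OF R_pos True x \<open>y \<noteq> x\<close>]
    by (simp add: has_bochner_integral_iff)
  also have "\<dots> = 2 * pi * (ln R * f y + f_log x 0 y / 2)"
    using R_pos \<open>y \<noteq> x\<close>
    by (simp add: f_log_def ln_mult ln_realpow norm_minus_commute algebra_simps)
  finally show ?thesis .
qed (simp add: boundary_integrand_def f_log_def vanishes)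

lemma integral_integral_boundary_integrand:
  assumes x: "norm x < R"
  shows "(LINT s|lborel. LINT y|lborel. boundary_integrand x (s, y))
    = 2 * pi * (ln R * (LINT y|lborel. f y) + (LINT y|lborel. f_log x 0 y) / 2)"
proof -
  have "(LINT s|lborel. LINT y|lborel. boundary_integrand x (s, y))
      = (LINT y|lborel. LINT s|lborel. boundary_integrand x (s, y))"
    using lborel_pair.Fubini_integral[of "\<lambda>s y. boundary_integrand x (s, y)"]
      integrable_boundary_integrand[OF x] by simp
  also have "\<dots> = (LINT y|lborel. 2 * pi * (ln R * f y + f_log x 0 y / 2))"
    using AE_lborel_singleton[of x]
    by (intro integral_cong_AE) (auto simp: integral_boundary_integrand_fst[OF x])
  also have "\<dots> = 2 * pi * (ln R * (LINT y|lborel. f y) + (LINT y|lborel. f_log x 0 y) / 2)"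
    using integrable_f integrable_f_log[of x 0] x R_pos by simp
  finally show ?thesis .
qed

lemma boundary_formula_integral:
  assumes x: "norm x < R"
  shows "(LBINT s=0..2*pi.
      (LBINT t=0..2*R. sph_mean f (R *\<^sub>R circ s) t * ln \<bar>t\<^sup>2 - (norm (x - R *\<^sub>R circ s))\<^sup>2\<bar> * t) * R)
    = R * (ln R * (LINT y|lborel. f y) + (LINT y|lborel. f_log x 0 y) / 2)"
proof -
  have "(LBINT s=0..2*pi.
      (LBINT t=0..2*R. sph_mean f (R *\<^sub>R circ s) t * ln \<bar>t\<^sup>2 - (norm (x - R *\<^sub>R circ s))\<^sup>2\<bar> * t) * R)
    = (LINT s|lborel. R / (2 * pi) * (LINT y|lborel. boundary_integrand x (s, y)))"
    by (simp add: LBINT_0_eq_indicator integral_sph_mean_ln[OF x] boundary_integrand_def)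
  also have "\<dots> = R * (ln R * (LINT y|lborel. f y) + (LINT y|lborel. f_log x 0 y) / 2)"
    by (simp add: integral_integral_boundary_integrand[OF x])
  finally show ?thesis .
qed

lemma log_pot_eq_integral_f_log: "log_pot R f x = (LINT y|lborel. f_log x 0 y) / (4 * pi)"
proof -
  have "(LINT y:ball 0 R|lborel. f y * ln (norm (x - y))) = (LINT y|lborel. f_log x 0 y / 2)"
    unfolding set_lebesgue_integral_def
  proof (intro Bochner_Integration.integral_cong refl)
    fix y
    show "indicator (ball 0 R) y *\<^sub>R (f y * ln (norm (x - y))) = f_log x 0 y / 2"
      by (cases "y = x") (auto simp: f_log_def indicator_def vanishes ln_realpow)
  qed
  then show ?thesis by (simp add: log_pot_def field_simps)
qed

lemma set_integral_ball_f: "(LINT y:ball 0 R|lborel. f y) = (LINT y|lborel. f y)"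
  unfolding set_lebesgue_integral_def
  by (intro Bochner_Integration.integral_cong) (auto simp: indicator_def vanishes)

end

lemma continuous_on_smooth_fun: "smooth_fun g \<Longrightarrow> continuous_on UNIV g"
  unfolding smooth_fun_def by (metis Ck.simps(1))

lemma vanishes_outside_support:
  assumes "closure {y. g y \<noteq> 0} \<subseteq> ball 0 R" "R \<le> norm y"
  shows "g y = 0"
  using assms closure_subset[of "{y. g y \<noteq> 0}"] by auto

lemma bounded_continuous_vanishing_outside_ball:
  fixes g :: "'a::euclidean_space \<Rightarrow> real"
  assumes "continuous_on UNIV g" "\<And>y. R \<le> norm y \<Longrightarrow> g y = 0"
  obtains C where "\<And>y. \<bar>g y\<bar> \<le> C"
proof -
  have "bounded (g ` cball 0 R)"
    by (intro compact_imp_bounded compact_continuous_image continuous_on_subset[OF assms(1)]) auto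
  then obtain a where a: "\<forall>y\<in>cball 0 R. \<bar>g y\<bar> \<le> a"
    unfolding bounded_iff by auto
  have "\<bar>g y\<bar> \<le> max a 0" for y
  proof (cases "norm y \<le> R")
    case True
    then have "\<bar>g y\<bar> \<le> a" using a by simp
    then show ?thesis by linarith
  qed (use assms(2)[of y] in simp)
  then show ?thesis using that by blast
qed

theorem lemma3p6:
  fixes R :: real and f :: "real^2 \<Rightarrow> real" and x :: "real^2"
  assumes "R > 0"
    and "smooth_fun f"
    and "closure {y. f y \<noteq> 0} \<subseteq> ball 0 R"
    and "x \<in> ball 0 R"
  shows "log_pot R f x =
    (1 / (2 * pi * R)) *
      (LBINT s=0..2*pi.
         (LBINT t=0..2*R. sph_mean f (R *\<^sub>R circ s) t
                            * ln \<bar>t\<^sup>2 - (norm (x - R *\<^sub>R circ s))\<^sup>2\<bar> * t) * R)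
    - (ln R / (2 * pi)) * (LINT y:ball 0 R|lborel. f y)"
proof -
  have continuous: "continuous_on UNIV f"
    using assms(2) by (rule continuous_on_smooth_fun)
  have vanishes: "\<And>y. R \<le> norm y \<Longrightarrow> f y = 0"
    using assms(3) by (rule vanishes_outside_support)
  obtain C where "\<And>y. \<bar>f y\<bar> \<le> C"
    using bounded_continuous_vanishing_outside_ball[OF continuous vanishes] by blast
  then interpret disc_supported R f C
    using assms(1) continuous vanishes by unfold_locales
  have "norm x < R" using assms(4) by simp
  then show ?thesis
    unfolding boundary_formula_integral[OF \<open>norm x < R\<close>] log_pot_eq_integral_f_log set_integral_ball_f
    using assms(1) by (simp add: field_simps)
qed

end
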